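(* Fix any total budget $\mathrm{TB}\in\mathbb N_0$. For all integers $n,m\in\mathbb Z$, the disjunctive sum of the integer game forms $(n)+(m)$ equals the integer game form $(n+m)$.
   Context: Game forms are defined recursively: $G=\{G^{\mathcal L}\mid G^{\mathcal R}\}$ with finite sets of Left and Right options, and finite birthday. Integer game forms: $(0)=\{\varnothing\mid\varnothing\}$; for $n\in\mathbb N$, $(n)=\{(n-1)\mid\varnothing\}$ and $(-n)=\overline{(n)}=\{\varnothing\mid(-(n-1))\}$, where the conjugate is $\bar G=\{\overline{G^{\mathcal R}}\mid\overline{G^{\mathcal L}}\}$. The budget set for total budget $\mathrm{TB}$ is $\mathcal B=\{0,\dots,\mathrm{TB},\hat 0,\dots,\widehat{\mathrm{TB}}\}$: state $p$ (resp. $\hat p$) means Left holds $p$ dollars and Right holds $\mathrm{TB}-p$, and Right (resp. Left) holds the tie-breaking marker. Play of $(G,\tilde p)$: at every position (terminal ones included) both players bid simultaneously, Left $\ell\in\{0,\dots,p\}$, Right $r\in\{0,\dots,\mathrm{TB}-p\}$. If Left holds the marker (state $\hat p$): if $\ell>r$ Left moves to $(G^L,\widehat{p-\ell})$, or, including the marker (allowed when $\ell\ge r$), to $(G^L,p-\ell)$; if $\ell=r$ Left wins, the marker passes to Right, play continues at $(G^L,p-\ell)$; if $\ell<r$ Right moves to $(G^R,\widehat{p+r})$. Symmetrically when Right holds the marker (state $p$): if $r>\ell$ Right moves to $(G^R,p+r)$ or, including the marker, to $(G^R,\widehat{p+r})$; if $r=\ell$ Right wins, the marker passes to Left, play continues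 at $(G^R,\widehat{p+r})$; if $r<\ell$ Left moves to $(G^L,p-\ell)$. A player who wins a bid but has no option loses. $o(G,\tilde p)\in\{\mathrm L,\mathrm R\}$ is the winner under optimal play; $\mathrm L>\mathrm R$. Disjunctive sum $G+H=\{G^{\mathcal L}+H,G+H^{\mathcal L}\mid G^{\mathcal R}+H,G+H^{\mathcal R}\}$. $G\ge H$ means $o(G+X,\tilde p)\ge o(H+X,\tilde p)$ for all game forms $X$ and all $\tilde p\in\mathcal B$; $G=H$ means $G\ge H$ and $H\ge G$. *)

theory Defs
  imports Main "HOL-Library.FSet"
begin

datatype game = Game (lopts: "game fset") (ropts: "game fset")

primrec conj :: "game \<Rightarrow> game" where
  "conj (Game L R) = Game (fimage conj R) (fimage conj L)"

primrec nat_game :: "nat \<Rightarrow> game" where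
  "nat_game 0 = Game {||} {||}"
| "nat_game (Suc n) = Game {|nat_game n|} {||}"

definition int_game :: "int \<Rightarrow> game" where
  "int_game n = (if 0 \<le> n then nat_game (nat n) else conj (nat_game (nat (- n))))"

text \<open>Disjunctive sum. Auxiliary: recursion on the second summand H, given
  the functions (\<lambda>H. G^L + H), (\<lambda>H. G^R + H) for the options of a fixed G.\<close>
primrec sum_aux :: "(game \<Rightarrow> game) fset \<Rightarrow> (game \<Rightarrow> game) fset \<Rightarrow> game \<Rightarrow> game" where
  "sum_aux FL FR (Game HL HR) =
     Game (fimage (\<lambda>f. f (Game HL HR)) FL |\<union>| fimage (sum_aux FL FR) HL)
          (fimage (\<lambda>f. f (Game HL HR)) FR |\<union>| fimage (sum_aux FL FR) HR)"

primrec game_plus :: "game \<Rightarrow> game \<Rightarrow> game" where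
  "game_plus (Game GL GR) = sum_aux (fimage game_plus GL) (fimage game_plus GR)"

text \<open>Outcome of bidding play. outcome G TB p lm: Left holds p dollars, Right
  holds TB - p, and lm is True iff Left holds the tie-breaking marker (state \<open>p\<close> hat).
  Result True means Left wins (L), False means Right wins (R).\<close>
primrec outcome :: "game \<Rightarrow> nat \<Rightarrow> nat \<Rightarrow> bool \<Rightarrow> bool" where
  "outcome (Game L R) = (let OL = fimage outcome L; OR = fimage outcome R in
     (\<lambda>TB p lm.
       (\<exists>l\<le>p. \<forall>r\<le>TB - p.
          (if lm then
             (if r < l then fBex OL (\<lambda>f. f TB (p - l) True \<or> f TB (p - l) False)
              else if l = r then fBex OL (\<lambda>f. f TB (p - l) False)
              else fBall OR (\<lambda>f. f TB (p + r) True))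
           else
             (if l < r then fBall OR (\<lambda>f. f TB (p + r) False \<and> f TB (p + r) True)
              else if l = r then fBall OR (\<lambda>f. f TB (p + r) True)
              else fBex OL (\<lambda>f. f TB (p - l) False))))))"

definition game_geq :: "nat \<Rightarrow> game \<Rightarrow> game \<Rightarrow> bool" where
  "game_geq TB G H = (\<forall>X p lm. p \<le> TB \<longrightarrow>
      (outcome (game_plus H X) TB p lm \<longrightarrow> outcome (game_plus G X) TB p lm))"

definition game_eq :: "nat \<Rightarrow> game \<Rightarrow> game \<Rightarrow> bool" where
  "game_eq TB G H = (game_geq TB G H \<and> game_geq TB H G)"

end

theory Submission
  imports Defs
begin

text \<open>The heart of the argument is \<open>(1) + (-1) = 0\<close>. In \<open>(1) + (-1) + X\<close> the extra Left move
  to \<open>(-1) + X\<close> and the extra Right move to \<open>(1) + X\<close> are dominated: by a simulation argument,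
  whenever Left wins \<open>Y\<close> she also wins \<open>(1) + Y\<close>, even with more money or with the marker
  gained, and whenever she wins \<open>(-1) + Y\<close> she also wins \<open>Y\<close> in the same sense. Equality is a
  congruence for the associative and commutative sum, so cancelling pairs \<open>(1) + (-1)\<close> gives
  \<open>(a) + (-b) = (a - b)\<close>, and every integer game form \<open>(n)\<close> is literally
  \<open>(max n 0) + (-max (-n) 0)\<close>.\<close>

lemma lopts_game_plus:
  "lopts (game_plus G H) = (\<lambda>g. game_plus g H) |`| lopts G |\<union>| game_plus G |`| lopts H"
  by (cases G; cases H) (simp add: fset.map_comp o_def)

lemma ropts_game_plus:
  "ropts (game_plus G H) = (\<lambda>g. game_plus g H) |`| ropts G |\<union>| game_plus G |`| ropts H"
  by (cases G; cases H) (simp add: fset.map_comp o_def)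

declare game_plus.simps[simp del] sum_aux.simps[simp del]

lemma game_plus_commute: "game_plus G H = game_plus H G"
proof (induction G arbitrary: H)
  case (Game GL GR)
  note IH_G = Game.IH
  show ?case
  proof (induction H)
    case (Game HL HR)
    let ?G = "Game GL GR" and ?H = "Game HL HR"
    have "(\<lambda>g. game_plus g ?H) |`| GL = game_plus ?H |`| GL"
      "(\<lambda>g. game_plus g ?H) |`| GR = game_plus ?H |`| GR"
      "game_plus ?G |`| HL = (\<lambda>h. game_plus h ?G) |`| HL"
      "game_plus ?G |`| HR = (\<lambda>h. game_plus h ?G) |`| HR"
      using IH_G Game.IH by (auto intro!: fimage_cong)
    then show ?case
      by (intro game.expand) (simp add: lopts_game_plus ropts_game_plus sup_commute)
  qed
qed

lemma game_plus_assoc: "game_plus (game_plus G H) K = game_plus G (game_plus H K)"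
proof (induction G arbitrary: H K)
  case (Game GL GR)
  note IH_G = Game.IH
  show ?case
  proof (induction H arbitrary: K)
    case (Game HL HR)
    note IH_H = Game.IH
    show ?case
    proof (induction K)
      case (Game KL KR)
      let ?G = "Game GL GR" and ?H = "Game HL HR" and ?K = "Game KL KR"
      have "(\<lambda>g. game_plus (game_plus g ?H) ?K) |`| GL = (\<lambda>g. game_plus g (game_plus ?H ?K)) |`| GL"
        "(\<lambda>g. game_plus (game_plus g ?H) ?K) |`| GR = (\<lambda>g. game_plus g (game_plus ?H ?K)) |`| GR"
        "(\<lambda>h. game_plus (game_plus ?G h) ?K) |`| HL = (\<lambda>h. game_plus ?G (game_plus h ?K)) |`| HL"
        "(\<lambda>h. game_plus (game_plus ?G h) ?K) |`| HR = (\<lambda>h. game_plus ?G (game_plus h ?K)) |`| HR"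
        "game_plus (game_plus ?G ?H) |`| KL = (\<lambda>k. game_plus ?G (game_plus ?H k)) |`| KL"
        "game_plus (game_plus ?G ?H) |`| KR = (\<lambda>k. game_plus ?G (game_plus ?H k)) |`| KR"
        using IH_G IH_H Game.IH by (auto intro!: fimage_cong)
      then show ?case
        by (intro game.expand)
          (simp add: lopts_game_plus ropts_game_plus fimage_funion fset.map_comp o_def sup_assoc)
    qed
  qed
qed

interpretation game_plus: abel_semigroup game_plus
  by unfold_locales (rule game_plus_assoc, rule game_plus_commute)

lemma game_plus_zero_left [simp]: "game_plus (Game {||} {||}) G = G"
  by (induction G) (auto simp: lopts_game_plus ropts_game_plus intro!: game.expand fset.map_ident_strong)

lemma game_plus_zero_right [simp]: "game_plus G (Game {||} {||}) = G"
  using game_plus_zero_left by (simp add: game_plus.commute)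

lemma lopts_nat_game: "lopts (nat_game n) = (if n = 0 then {||} else {|nat_game (n - 1)|})"
  by (cases n) auto

lemma ropts_nat_game: "ropts (nat_game n) = {||}"
  by (cases n) auto

lemma lopts_conj_nat_game: "lopts (conj (nat_game n)) = {||}"
  by (cases n) auto

lemma ropts_conj_nat_game:
  "ropts (conj (nat_game n)) = (if n = 0 then {||} else {|conj (nat_game (n - 1))|})"
  by (cases n) auto

lemma nat_game_add: "game_plus (nat_game a) (nat_game b) = nat_game (a + b)"
proof (induction "a + b" arbitrary: a b rule: less_induct)
  case less
  have "a \<noteq> 0 \<Longrightarrow> game_plus (nat_game (a - 1)) (nat_game b) = nat_game (a + b - 1)"
    "b \<noteq> 0 \<Longrightarrow> game_plus (nat_game a) (nat_game (b - 1)) = nat_game (a + b - 1)"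
    using less[of "a - 1" b] less[of a "b - 1"] by simp_all
  then show ?case
    by (intro game.expand) (auto simp: lopts_game_plus ropts_game_plus lopts_nat_game ropts_nat_game)
qed

lemma conj_nat_game_add:
  "game_plus (conj (nat_game a)) (conj (nat_game b)) = conj (nat_game (a + b))"
proof (induction "a + b" arbitrary: a b rule: less_induct)
  case less
  have "a \<noteq> 0 \<Longrightarrow> game_plus (conj (nat_game (a - 1))) (conj (nat_game b)) = conj (nat_game (a + b - 1))"
    "b \<noteq> 0 \<Longrightarrow> game_plus (conj (nat_game a)) (conj (nat_game (b - 1))) = conj (nat_game (a + b - 1))"
    using less[of "a - 1" b] less[of a "b - 1"] by simp_all
  then show ?case
    by (intro game.expand)
      (auto simp: lopts_game_plus ropts_game_plus lopts_conj_nat_game ropts_conj_nat_game)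
qed

lemma int_game_eq_plus_conj: "int_game k = game_plus (nat_game (nat k)) (conj (nat_game (nat (- k))))"
  by (simp add: int_game_def)

definition left_move_wins :: "nat \<Rightarrow> game \<Rightarrow> nat \<Rightarrow> bool \<Rightarrow> bool" where
  "left_move_wins TB G q lm \<longleftrightarrow> (\<exists>g. g |\<in>| lopts G \<and> outcome g TB q lm)"

definition right_moves_lose :: "nat \<Rightarrow> game \<Rightarrow> nat \<Rightarrow> bool \<Rightarrow> bool" where
  "right_moves_lose TB G q lm \<longleftrightarrow> (\<forall>g. g |\<in>| ropts G \<longrightarrow> outcome g TB q lm)"

text \<open>One round of bidding with bids \<open>l\<close> and \<open>r\<close>; \<open>lw q m\<close> (\<open>rw q m\<close>) tells whether Left
  wins after a Left (Right) move that leaves Left with \<open>q\<close> dollars and the marker iff \<open>m\<close>.\<close>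
definition left_wins_round ::
    "(nat \<Rightarrow> bool \<Rightarrow> bool) \<Rightarrow> (nat \<Rightarrow> bool \<Rightarrow> bool) \<Rightarrow> nat \<Rightarrow> bool \<Rightarrow> nat \<Rightarrow> nat \<Rightarrow> bool" where
  "left_wins_round lw rw p lm l r =
    (if lm then
       (if r < l then lw (p - l) True \<or> lw (p - l) False
        else if l = r then lw (p - l) False
        else rw (p + r) True)
     else
       (if l < r then rw (p + r) False \<and> rw (p + r) True
        else if l = r then rw (p + r) True
        else lw (p - l) False))"

definition left_wins_bidding ::
    "(nat \<Rightarrow> bool \<Rightarrow> bool) \<Rightarrow> (nat \<Rightarrow> bool \<Rightarrow> bool) \<Rightarrow> nat \<Rightarrow> nat \<Rightarrow> bool \<Rightarrow> bool" where
  "left_wins_bidding lw rw TB p lm \<longleftrightarrow> (\<exists>l\<le>p. \<forall>r\<le>TB - p. left_wins_round lw rw p lm l r)"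

lemma outcome_eq_left_wins_bidding:
  "outcome G TB p lm = left_wins_bidding (left_move_wins TB G) (right_moves_lose TB G) TB p lm"
proof (cases G)
  case (Game L R)
  have "left_move_wins TB G = (\<lambda>q m. fBex (outcome |`| L) (\<lambda>f. f TB q m))"
    "right_moves_lose TB G = (\<lambda>q m. fBall (outcome |`| R) (\<lambda>f. f TB q m))"
    by (auto simp: Game left_move_wins_def right_moves_lose_def fun_eq_iff
        intro: fBexI fBallI elim: fBexE dest: fbspec)
  then show ?thesis
    by (simp add: Game Let_def left_wins_bidding_def left_wins_round_def fBex_disj_distrib fBall_conj_distrib)
qed

declare outcome.simps[simp del]

lemma left_wins_bidding_mono:
  assumes win: "left_wins_bidding lw rw TB p lm" and "p \<le> q" "q \<le> TB"
    and lw: "\<And>x y m. lw x m \<Longrightarrow> x \<le> y \<Longrightarrow> y \<le> TB \<Longrightarrow> lw' y m"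
    and rw: "\<And>x y m. rw x m \<Longrightarrow> x \<le> y \<Longrightarrow> y \<le> TB \<Longrightarrow> rw' y m"
  shows "left_wins_bidding lw' rw' TB q lm"
proof -
  from win obtain l where l: "l \<le> p" "\<forall>r\<le>TB - p. left_wins_round lw rw p lm l r"
    by (auto simp: left_wins_bidding_def)
  have "left_wins_round lw' rw' q lm l r" if "r \<le> TB - q" for r
  proof -
    have "left_wins_round lw rw p lm l r" using l that \<open>p \<le> q\<close> by auto
    moreover have "p - l \<le> q - l" "p + r \<le> q + r" "q + r \<le> TB"
      using that \<open>p \<le> q\<close> \<open>q \<le> TB\<close> by auto
    ultimately show ?thesis
      using lw rw \<open>q \<le> TB\<close> unfolding left_wins_round_def by (auto split: if_splits)
  qed
  with l \<open>p \<le> q\<close> show ?thesis unfolding left_wins_bidding_def by (intro exI[of _ l]) auto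
qed

lemma left_wins_bidding_cong:
  assumes "\<And>q m. q \<le> TB \<Longrightarrow> lw q m = lw' q m" "\<And>q m. q \<le> TB \<Longrightarrow> rw q m = rw' q m" "p \<le> TB"
  shows "left_wins_bidding lw rw TB p lm = left_wins_bidding lw' rw' TB p lm"
proof -
  have "left_wins_round lw rw p lm l r = left_wins_round lw' rw' p lm l r"
    if "l \<le> p" "r \<le> TB - p" for l r
    using that assms unfolding left_wins_round_def by auto
  then show ?thesis unfolding left_wins_bidding_def by (meson order.trans)
qed

lemma left_wins_bidding_add_dominated:
  assumes "p \<le> TB"
    and A: "\<And>q m. q \<le> p \<Longrightarrow> (m \<longrightarrow> lm) \<Longrightarrow> A q m \<Longrightarrow> outcome H TB p lm"
    and B: "\<And>q m. p \<le> q \<Longrightarrow> q \<le> TB \<Longrightarrow> (lm \<longrightarrow> m) \<Longrightarrow> outcome H TB p lm \<Longrightarrow> B q m"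
  shows "left_wins_bidding (\<lambda>q m. left_move_wins TB H q m \<or> A q m)
      (\<lambda>q m. right_moves_lose TB H q m \<and> B q m) TB p lm = outcome H TB p lm"
    (is "left_wins_bidding ?lw ?rw TB p lm = _")
proof
  assume win: "outcome H TB p lm"
  then obtain l where l: "l \<le> p"
    "\<And>r. r \<le> TB - p \<Longrightarrow> left_wins_round (left_move_wins TB H) (right_moves_lose TB H) p lm l r"
    by (auto simp: outcome_eq_left_wins_bidding left_wins_bidding_def)
  have "left_wins_round ?lw ?rw p lm l r" if "r \<le> TB - p" for r
  proof -
    have "B (p + r) True" "\<not> lm \<Longrightarrow> B (p + r) False"
      using B[of "p + r"] that \<open>p \<le> TB\<close> win by auto
    with l(2)[OF that] show ?thesis unfolding left_wins_round_def by (auto split: if_splits)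
  qed
  with l(1) show "left_wins_bidding ?lw ?rw TB p lm"
    unfolding left_wins_bidding_def by blast
next
  assume win: "left_wins_bidding ?lw ?rw TB p lm"
  show "outcome H TB p lm"
  proof (rule ccontr)
    assume lose: "\<not> outcome H TB p lm"
    from win obtain l where l: "l \<le> p" "\<And>r. r \<le> TB - p \<Longrightarrow> left_wins_round ?lw ?rw p lm l r"
      by (auto simp: left_wins_bidding_def)
    have "left_wins_round (left_move_wins TB H) (right_moves_lose TB H) p lm l r"
      if "r \<le> TB - p" for r
    proof -
      have "\<not> A (p - l) False" "lm \<Longrightarrow> \<not> A (p - l) True"
        using A[of "p - l"] lose by auto
      with l(2)[OF that] show ?thesis unfolding left_wins_round_def by (auto split: if_splits)
    qed
    with l(1) lose show False
      unfolding outcome_eq_left_wins_bidding left_wins_bidding_def by blast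
  qed
qed

lemma left_wins_bidding_gain_marker:
  assumes win: "left_wins_bidding lw rw TB p False" and "p \<le> q" "q \<le> TB"
    and lw: "\<And>x y m. lw x m \<Longrightarrow> x \<le> y \<Longrightarrow> y \<le> TB \<Longrightarrow> lw' y m"
    and rw: "\<And>x y m. rw x m \<Longrightarrow> x \<le> y \<Longrightarrow> y \<le> TB \<Longrightarrow> rw' y m"
    and tie: "rw p True \<Longrightarrow> lw' q False"
  shows "left_wins_bidding lw' rw' TB q True"
proof -
  from win obtain l where l: "l \<le> p" "\<And>r. r \<le> TB - p \<Longrightarrow> left_wins_round lw rw p False l r"
    by (auto simp: left_wins_bidding_def)
  have rw_above: "rw' (q + r) True" if "l \<le> r" "r \<le> TB - q" for r
  proof -
    have "left_wins_round lw rw p False l r"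
      using l(2) that \<open>p \<le> q\<close> by simp
    with \<open>l \<le> r\<close> have "rw (p + r) True"
      by (auto simp: left_wins_round_def split: if_splits)
    then show ?thesis by (rule rw) (use that \<open>p \<le> q\<close> \<open>q \<le> TB\<close> in auto)
  qed
  show ?thesis
  proof (cases "l = 0")
    case True
    \<comment> \<open>Left now wins a tie at zero herself, so she needs a good move there\<close>
    have "lw' q False"
      using tie l(2)[of 0] True by (simp add: left_wins_round_def)
    then have "left_wins_round lw' rw' q True 0 r" if "r \<le> TB - q" for r
      using rw_above[OF _ that] True by (auto simp: left_wins_round_def)
    then show ?thesis unfolding left_wins_bidding_def by auto
  next
    case False
    \<comment> \<open>with the marker, a bid of one dollar less wins the same rounds\<close>
    have "left_wins_round lw' rw' q True (l - 1) r" if "r \<le> TB - q" for r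
    proof (cases "r < l")
      case True
      then have "lw (p - l) False"
        using l(2)[of r] that \<open>p \<le> q\<close> by (auto simp: left_wins_round_def)
      then have "lw' (q - (l - 1)) False"
        by (rule lw) (use l(1) \<open>p \<le> q\<close> \<open>q \<le> TB\<close> \<open>l \<noteq> 0\<close> in auto)
      with True \<open>l \<noteq> 0\<close> show ?thesis by (auto simp: left_wins_round_def)
    next
      case False
      with rw_above that \<open>l \<noteq> 0\<close> show ?thesis by (auto simp: left_wins_round_def)
    qed
    with l(1) \<open>p \<le> q\<close> show ?thesis
      unfolding left_wins_bidding_def by (intro exI[of _ "l - 1"]) auto
  qed
qed

lemma outcome_mono_budget: "outcome G TB p lm \<Longrightarrow> p \<le> q \<Longrightarrow> q \<le> TB \<Longrightarrow> outcome G TB q lm"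
proof (induction G arbitrary: p q lm)
  case (Game L R)
  show ?case
    using Game.prems unfolding outcome_eq_left_wins_bidding
    by (rule left_wins_bidding_mono)
      (use Game.IH in \<open>auto simp: left_move_wins_def right_moves_lose_def\<close>)
qed

text \<open>Holding the marker is not always an advantage: in the empty game form Left wins without it
  but loses with it, since she must then win the bid and has no move. The last condition on \<open>R\<close>
  is what lets Left profit from a marker gained in passing from \<open>X\<close> to \<open>Y\<close>.\<close>
lemma outcome_mono_simulation:
  assumes sim: "\<And>X Y. R X Y \<Longrightarrow>
      (\<forall>x. x |\<in>| lopts X \<longrightarrow> (\<exists>y. y |\<in>| lopts Y \<and> R x y)) \<and>
      (\<forall>y. y |\<in>| ropts Y \<longrightarrow> (\<exists>x. x |\<in>| ropts X \<and> R x y)) \<and>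
      (X |\<in>| lopts Y \<or> Y |\<in>| ropts X)"
  shows "R X Y \<Longrightarrow> outcome X TB p lm \<Longrightarrow> p \<le> q \<Longrightarrow> q \<le> TB \<Longrightarrow> (lm \<longrightarrow> lm') \<Longrightarrow>
    outcome Y TB q lm'"
proof (induction X arbitrary: Y p q lm lm')
  case (Game XL XR)
  let ?X = "Game XL XR"
  from sim[OF Game.prems(1)] have
    left: "\<And>x. x |\<in>| XL \<Longrightarrow> \<exists>y. y |\<in>| lopts Y \<and> R x y" and
    right: "\<And>y. y |\<in>| ropts Y \<Longrightarrow> \<exists>x. x |\<in>| XR \<and> R x y" and
    pass: "?X |\<in>| lopts Y \<or> Y |\<in>| XR"
    by auto
  have lw: "left_move_wins TB Y y m"
    if "left_move_wins TB ?X x m" "x \<le> y" "y \<le> TB" for x y m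
  proof -
    from that(1) obtain x' where x': "x' |\<in>| XL" "outcome x' TB x m"
      by (auto simp: left_move_wins_def)
    with left obtain y' where "y' |\<in>| lopts Y" "R x' y'" by blast
    with Game.IH(1)[OF x'(1) \<open>R x' y'\<close> x'(2)] that show ?thesis
      by (auto simp: left_move_wins_def)
  qed
  have rw: "right_moves_lose TB Y y m"
    if "right_moves_lose TB ?X x m" "x \<le> y" "y \<le> TB" for x y m
    unfolding right_moves_lose_def
  proof (intro allI impI)
    fix y' assume "y' |\<in>| ropts Y"
    with right obtain x' where x': "x' |\<in>| XR" "R x' y'" by blast
    with that have "outcome x' TB x m" by (auto simp: right_moves_lose_def)
    with Game.IH(2)[OF x'] that show "outcome y' TB y m" by auto
  qed
  have win_X: "left_wins_bidding (left_move_wins TB ?X) (right_moves_lose TB ?X) TB p lm"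
    using Game.prems(2) by (simp add: outcome_eq_left_wins_bidding)
  show ?case
  proof (cases "lm' = lm")
    case True
    show ?thesis unfolding outcome_eq_left_wins_bidding True
      by (rule left_wins_bidding_mono[OF win_X _ _ lw rw]) (use Game.prems in auto)
  next
    case False
    with Game.prems have marker: "lm = False" "lm' = True" by auto
    have gain: ?thesis if "right_moves_lose TB ?X p True \<Longrightarrow> left_move_wins TB Y q False"
      unfolding outcome_eq_left_wins_bidding marker
      by (rule left_wins_bidding_gain_marker[OF win_X[unfolded marker] _ _ lw rw])
        (use Game.prems that in auto)
    from pass show ?thesis
    proof
      assume "?X |\<in>| lopts Y"
      moreover have "outcome ?X TB q False"
        using outcome_mono_budget[OF Game.prems(2-4)] marker by simp
      ultimately show ?thesis
        by (intro gain) (auto simp: left_move_wins_def)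
    next
      assume Y_right: "Y |\<in>| XR"
      show ?thesis
      proof (cases "right_moves_lose TB ?X p True")
        case True
        with Y_right have "outcome Y TB p True" by (simp add: right_moves_lose_def)
        then show ?thesis using outcome_mono_budget[OF _ Game.prems(3,4)] marker by simp
      next
        case False
        then show ?thesis by (intro gain) simp
      qed
    qed
  qed
qed

lemma outcome_plus_one_mono:
  assumes "outcome X TB p lm" "p \<le> q" "q \<le> TB" "lm \<longrightarrow> lm'"
  shows "outcome (game_plus (nat_game 1) X) TB q lm'"
  by (rule outcome_mono_simulation[where R = "\<lambda>X Y. Y = game_plus (nat_game 1) X", OF _ refl assms])
    (auto simp: lopts_game_plus ropts_game_plus lopts_nat_game ropts_nat_game)

lemma outcome_minus_one_mono:
  assumes "outcome (game_plus (conj (nat_game 1)) Y) TB p lm" "p \<le> q" "q \<le> TB" "lm \<longrightarrow> lm'"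
  shows "outcome Y TB q lm'"
  by (rule outcome_mono_simulation[where R = "\<lambda>X Y. X = game_plus (conj (nat_game 1)) Y", OF _ refl assms])
    (auto simp: lopts_game_plus ropts_game_plus lopts_conj_nat_game ropts_conj_nat_game)

lemma outcome_cancel_one_plus_conj_one:
  assumes "p \<le> TB"
  shows "outcome (game_plus (game_plus (nat_game 1) (conj (nat_game 1))) X) TB p lm = outcome X TB p lm"
  using assms
proof (induction X arbitrary: p lm)
  case (Game XL XR)
  let ?Z = "game_plus (nat_game 1) (conj (nat_game 1))" and ?X = "Game XL XR"
  let ?K = "game_plus ?Z ?X"
  have Z: "lopts ?Z = {|conj (nat_game 1)|}" "ropts ?Z = {|nat_game 1|}"
    by (simp_all add: lopts_game_plus ropts_game_plus lopts_nat_game ropts_nat_game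
        lopts_conj_nat_game ropts_conj_nat_game)
  have "left_move_wins TB ?K q m \<longleftrightarrow>
      left_move_wins TB ?X q m \<or> outcome (game_plus (conj (nat_game 1)) ?X) TB q m"
    if "q \<le> TB" for q m
    using Game.IH(1) that by (auto simp: left_move_wins_def lopts_game_plus Z)
  moreover have "right_moves_lose TB ?K q m \<longleftrightarrow>
      right_moves_lose TB ?X q m \<and> outcome (game_plus (nat_game 1) ?X) TB q m"
    if "q \<le> TB" for q m
    using Game.IH(2) that by (auto simp: right_moves_lose_def ropts_game_plus Z)
  ultimately have "outcome ?K TB p lm = left_wins_bidding
      (\<lambda>q m. left_move_wins TB ?X q m \<or> outcome (game_plus (conj (nat_game 1)) ?X) TB q m)
      (\<lambda>q m. right_moves_lose TB ?X q m \<and> outcome (game_plus (nat_game 1) ?X) TB q m) TB p lm"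
    unfolding outcome_eq_left_wins_bidding[of ?K]
    by (intro left_wins_bidding_cong) (use Game.prems in auto)
  also have "\<dots> = outcome ?X TB p lm"
    by (rule left_wins_bidding_add_dominated)
      (use Game.prems outcome_minus_one_mono outcome_plus_one_mono in blast)+
  finally show ?case .
qed

lemma game_eq_iff_outcome:
  "game_eq TB G H \<longleftrightarrow>
    (\<forall>X p lm. p \<le> TB \<longrightarrow> outcome (game_plus G X) TB p lm = outcome (game_plus H X) TB p lm)"
  unfolding game_eq_def game_geq_def by blast

lemma game_eq_refl: "game_eq TB G G"
  by (simp add: game_eq_iff_outcome)

lemma game_eq_trans [trans]: "game_eq TB G H \<Longrightarrow> game_eq TB H K \<Longrightarrow> game_eq TB G K"
  by (simp add: game_eq_iff_outcome)

lemma game_eq_plus_right: "game_eq TB G H \<Longrightarrow> game_eq TB (game_plus G K) (game_plus H K)"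
  by (simp add: game_eq_iff_outcome game_plus.assoc)

lemma game_eq_one_plus_conj_one_zero:
  "game_eq TB (game_plus (nat_game 1) (conj (nat_game 1))) (nat_game 0)"
  unfolding game_eq_iff_outcome using outcome_cancel_one_plus_conj_one by simp

lemma game_eq_nat_game_plus_conj:
  "game_eq TB (game_plus (nat_game a) (conj (nat_game b))) (int_game (int a - int b))"
proof (induction a arbitrary: b)
  case 0
  show ?case
    using game_eq_refl int_game_eq_plus_conj[of "- int b"] by simp
next
  case (Suc a)
  show ?case
  proof (cases b)
    case 0
    then show ?thesis
      by (simp add: int_game_def game_eq_refl del: of_nat_Suc)
  next
    case (Suc b')
    have "game_plus (nat_game (Suc a)) (conj (nat_game b)) =
        game_plus (game_plus (nat_game 1) (conj (nat_game 1))) (game_plus (nat_game a) (conj (nat_game b')))"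
      unfolding Suc Suc_eq_plus1_left conj_nat_game_add[symmetric]
      unfolding nat_game_add[symmetric]
      by (simp only: game_plus.assoc game_plus.commute game_plus.left_commute)
    also have "game_eq TB \<dots> (game_plus (nat_game 0) (game_plus (nat_game a) (conj (nat_game b'))))"
      by (rule game_eq_plus_right[OF game_eq_one_plus_conj_one_zero])
    also have "\<dots> = game_plus (nat_game a) (conj (nat_game b'))"
      by simp
    also have "game_eq TB \<dots> (int_game (int (Suc a) - int b))"
      using Suc.IH[of b'] by (simp add: Suc)
    finally show ?thesis .
  qed
qed

theorem mainTheorem14:
  fixes TB :: nat and n m :: int
  shows "game_eq TB (game_plus (int_game n) (int_game m)) (int_game (n + m))"
proof -
  have "game_plus (int_game n) (int_game m) =
      game_plus (nat_game (nat n + nat m)) (conj (nat_game (nat (- n) + nat (- m))))"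
    unfolding int_game_eq_plus_conj[of n] int_game_eq_plus_conj[of m] conj_nat_game_add[symmetric]
    unfolding nat_game_add[symmetric]
    by (simp only: game_plus.assoc game_plus.commute game_plus.left_commute)
  moreover have "int (nat n + nat m) - int (nat (- n) + nat (- m)) = n + m"
    by simp
  ultimately show ?thesis
    using game_eq_nat_game_plus_conj[of TB "nat n + nat m" "nat (- n) + nat (- m)"] by simp
qed

end
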